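(* Assume (H3) with a common penalty function $g$ that is positively 1-homogeneous ($g(\lambda x)=\lambda g(x)$ for all $\lambda\ge0$, $x\le 0$). Let $c\in[0,u]$ be a constant and consider the $(d+1)$-dimensional risk vector $(c,X_1,\ldots,X_d)$ whose first component is deterministic and equal to $c$. Assume (H1) holds for the indicator $I$ associated with $(c,X_1,\ldots,X_d)$ and capital $u$ (on $\mathcal{U}^{d+1}_u$), and for the indicator $I$ associated with $(X_1,\ldots,X_d)$ and capital $u-c$ (on $\mathcal{U}^{d}_{u-c}$). Then $A_{c,X_1,\ldots,X_d}(u)=(c,A_{X_1,\ldots,X_d}(u-c))$, the concatenation of $c$ with the vector $A_{X_1,\ldots,X_d}(u-c)$.
   Context: For a random vector $\mathbf Y=(Y_1,\ldots,Y_m)$ of nonnegative random variables and a capital $w\ge 0$, let $\mathcal{U}^m_w=\{v\in[0,w]^m:\sum_k v_k=w\}$ and define the indicator $I_{\mathbf Y,w}(v)=\sum_{k=1}^m \mathbb{E}[g_k(v_k-Y_k)\mathbf 1_{\{Y_k>v_k\}}\mathbf 1_{\{\sum_{l=1}^m Y_l\le w\}}]$, $v\in\mathcal{U}^m_w$, where the penalty functions $g_k:(-\infty,0]\to[0,\infty)$ are $C^1$, convex, with $g_k(0)=0$. (H1): $I_{\mathbf Y,w}$ has a unique minimizer on $\mathcal{U}^m_w$, denoted $A_{Y_1,\ldots,Y_m}(w)$ (the optimal allocation). (H3): all penalty functions equal a common $g$. Here $(X_1,\ldots,X_d)$ is a vector of nonnegative random variables and $u\ge0$. *)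

theory Defs
  imports "HOL-Probability.Probability"
begin

definition alloc_set :: "nat \<Rightarrow> real \<Rightarrow> real list set" where
  "alloc_set m w = {v. length v = m \<and> (\<forall>k<m. 0 \<le> v ! k \<and> v ! k \<le> w) \<and> sum_list v = w}"

definition indicator_fn ::
  "'a measure \<Rightarrow> (real \<Rightarrow> real) \<Rightarrow> ('a \<Rightarrow> real) list \<Rightarrow> real \<Rightarrow> real list \<Rightarrow> real" where
  "indicator_fn M g Y w v =
     (\<Sum>k<length Y. integral\<^sup>L M (\<lambda>\<omega>.
        g (v ! k - (Y ! k) \<omega>)
        * indicator {\<omega>. (Y ! k) \<omega> > v ! k} \<omega>
        * indicator {\<omega>. (\<Sum>l<length Y. (Y ! l) \<omega>) \<le> w} \<omega>))"

definition is_minimizer ::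
  "'a measure \<Rightarrow> (real \<Rightarrow> real) \<Rightarrow> ('a \<Rightarrow> real) list \<Rightarrow> real \<Rightarrow> real list \<Rightarrow> bool" where
  "is_minimizer M g Y w v \<longleftrightarrow> v \<in> alloc_set (length Y) w \<and>
     (\<forall>v'\<in>alloc_set (length Y) w. indicator_fn M g Y w v \<le> indicator_fn M g Y w v')"

definition H1 :: "'a measure \<Rightarrow> (real \<Rightarrow> real) \<Rightarrow> ('a \<Rightarrow> real) list \<Rightarrow> real \<Rightarrow> bool" where
  "H1 M g Y w \<longleftrightarrow> (\<exists>!v. is_minimizer M g Y w v)"

definition opt_alloc :: "'a measure \<Rightarrow> (real \<Rightarrow> real) \<Rightarrow> ('a \<Rightarrow> real) list \<Rightarrow> real \<Rightarrow> real list" where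
  "opt_alloc M g Y w = (THE v. is_minimizer M g Y w v)"

definition penalty_fn :: "(real \<Rightarrow> real) \<Rightarrow> bool" where
  "penalty_fn g \<longleftrightarrow>
     (\<exists>g'. continuous_on {..0} g' \<and>
        (\<forall>x\<in>{..0}. (g has_real_derivative g' x) (at x within {..0}))) \<and>
     convex_on {..0} g \<and> (\<forall>x\<le>0. 0 \<le> g x) \<and> g 0 = 0"

end

theory Submission imports Defs begin

text \<open>For a 1-homogeneous penalty, \<open>g x = g (-1) * (-x)\<close> on \<open>x \<le> 0\<close>, so the indicator is
  \<open>g (-1)\<close> times the expected shortfall \<open>\<Sum>\<^sub>k E[(Y\<^sub>k - v\<^sub>k)\<^sup>+; \<Sum>\<^sub>l Y\<^sub>l \<le> w]\<close>. Prepending the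
  constant risk \<open>c\<close> with allocation \<open>v\<^sub>0\<close> adds \<open>(c - v\<^sub>0)\<^sup>+ P(\<Sum>\<^sub>l X\<^sub>l \<le> u - c)\<close>, and the
  remaining allocation for \<open>X\<close>, which has total \<open>u - v\<^sub>0\<close>, can be moved into the simplex of
  total \<open>u - c\<close> while lowering its components by at most \<open>(c - v\<^sub>0)\<^sup>+\<close> in total; this raises
  the shortfall of \<open>X\<close> by at most \<open>(c - v\<^sub>0)\<^sup>+ P(\<Sum>\<^sub>l X\<^sub>l \<le> u - c)\<close>. Hence allocating exactly
  \<open>c\<close> to the constant risk and the optimum for \<open>X\<close> to the rest is optimal.\<close>

abbreviation total_le :: "('a \<Rightarrow> real) list \<Rightarrow> real \<Rightarrow> 'a set" where
  "total_le Y t \<equiv> {\<omega>. (\<Sum>l<length Y. (Y ! l) \<omega>) \<le> t}"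

definition shortfall :: "'a measure \<Rightarrow> ('a \<Rightarrow> real) list \<Rightarrow> real \<Rightarrow> real list \<Rightarrow> real" where
  "shortfall M Y t v =
     (\<Sum>k<length Y. \<integral>\<omega>. max ((Y ! k) \<omega> - v ! k) 0 * indicator (total_le Y t) \<omega> \<partial>M)"

lemma homogeneous_penalty_indicator:
  assumes "\<forall>t\<ge>0. \<forall>x\<le>0. g (t * x) = t * g x"
  shows "g (v - f \<omega>) * indicator {\<omega>. f \<omega> > v} \<omega> = g (-1) * max (f \<omega> - v) (0::real)"
proof (cases "f \<omega> > v")
  case True
  then have "g (v - f \<omega>) = (f \<omega> - v) * g (-1)"
    using assms[rule_format, of "f \<omega> - v" "-1"] by simp
  with True show ?thesis by simp
qed simp

lemma indicator_fn_eq_shortfall: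
  assumes "\<forall>t\<ge>0. \<forall>x\<le>0. g (t * x) = t * g x"
  shows "indicator_fn M g Y t v = g (-1) * shortfall M Y t v"
  unfolding indicator_fn_def shortfall_def sum_distrib_left
  by (intro sum.cong refl)
     (simp add: homogeneous_penalty_indicator[OF assms] mult.assoc)

lemma indicator_fn_Cons_const:
  assumes "\<forall>t\<ge>0. \<forall>x\<le>0. g (t * x) = t * g x"
  shows "indicator_fn M g ((\<lambda>_. c) # X) u (v\<^sub>0 # v) =
    g (-1) * (max (c - v\<^sub>0) 0 * (\<integral>\<omega>. indicator (total_le X (u - c)) \<omega> \<partial>M) + shortfall M X (u - c) v)"
proof -
  have total: "total_le ((\<lambda>_. c) # X) u = total_le X (u - c)"
    by (simp only: length_Cons sum.lessThan_Suc_shift nth_Cons_0 nth_Cons_Suc) auto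
  have "indicator_fn M g ((\<lambda>_. c) # X) u (v\<^sub>0 # v) =
      (\<integral>\<omega>. g (v\<^sub>0 - c) * indicator {\<omega>. c > v\<^sub>0} \<omega> * indicator (total_le X (u - c)) \<omega> \<partial>M)
      + indicator_fn M g X (u - c) v"
    unfolding indicator_fn_def total[symmetric]
    by (simp only: length_Cons sum.lessThan_Suc_shift nth_Cons_0 nth_Cons_Suc)
  also have "\<dots> = g (-1) * max (c - v\<^sub>0) 0 * (\<integral>\<omega>. indicator (total_le X (u - c)) \<omega> \<partial>M)
      + g (-1) * shortfall M X (u - c) v"
  proof -
    have "g (v\<^sub>0 - c) * indicator {\<omega>. c > v\<^sub>0} \<omega> = g (-1) * max (c - v\<^sub>0) 0" for \<omega> :: 'a
      by (rule homogeneous_penalty_indicator[OF assms, of v\<^sub>0 "\<lambda>_. c"])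
    then show ?thesis by (simp add: indicator_fn_eq_shortfall[OF assms] mult.assoc)
  qed
  finally show ?thesis by (simp add: algebra_simps)
qed

context prob_space
begin

lemma borel_measurable_indicator_total_le:
  assumes "\<forall>k<length Y. Y ! k \<in> borel_measurable M"
  shows "(\<lambda>\<omega>. indicator (total_le Y t) \<omega> :: real) \<in> borel_measurable M"
proof -
  have "(\<lambda>\<omega>. \<Sum>l<length Y. (Y ! l) \<omega>) \<in> borel_measurable M"
    using assms by (intro borel_measurable_sum) auto
  then show ?thesis by measurable
qed

lemma integrable_shortfall_term:
  assumes meas: "\<forall>k<length Y. Y ! k \<in> borel_measurable M"
    and nonneg: "\<forall>k<length Y. \<forall>\<omega>\<in>space M. 0 \<le> (Y ! k) \<omega>"
    and "k < length Y"
  shows "integrable M (\<lambda>\<omega>. max ((Y ! k) \<omega> - r) 0 * indicator (total_le Y t) \<omega>)"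
proof (rule integrable_const_bound[where B = "\<bar>t\<bar> + \<bar>r\<bar>"])
  show "AE \<omega> in M. norm (max ((Y ! k) \<omega> - r) 0 * indicator (total_le Y t) \<omega>) \<le> \<bar>t\<bar> + \<bar>r\<bar>"
  proof (intro AE_I2)
    fix \<omega> assume \<omega>: "\<omega> \<in> space M"
    have "(Y ! k) \<omega> \<le> (\<Sum>l<length Y. (Y ! l) \<omega>)"
      by (rule member_le_sum) (use assms \<omega> in auto)
    with \<omega> nonneg \<open>k < length Y\<close>
    show "norm (max ((Y ! k) \<omega> - r) 0 * indicator (total_le Y t) \<omega>) \<le> \<bar>t\<bar> + \<bar>r\<bar>"
      by (auto simp: indicator_def)
  qed
  have "Y ! k \<in> borel_measurable M" using meas \<open>k < length Y\<close> by simp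
  then show "(\<lambda>\<omega>. max ((Y ! k) \<omega> - r) 0 * indicator (total_le Y t) \<omega>) \<in> borel_measurable M"
    by (intro borel_measurable_times borel_measurable_max borel_measurable_diff
        borel_measurable_indicator_total_le[OF meas]) auto
qed

lemma shortfall_le_shortfall_add:
  assumes meas: "\<forall>k<length Y. Y ! k \<in> borel_measurable M"
    and nonneg: "\<forall>k<length Y. \<forall>\<omega>\<in>space M. 0 \<le> (Y ! k) \<omega>"
    and lowered: "(\<Sum>k<length Y. max (v ! k - w ! k) 0) \<le> r"
  shows "shortfall M Y t w \<le> shortfall M Y t v + r * (\<integral>\<omega>. indicator (total_le Y t) \<omega> \<partial>M)"
proof -
  define A where "A = total_le Y t"
  define F where "F z \<omega> = (\<Sum>k<length Y. max ((Y ! k) \<omega> - z ! k) 0 * indicator A \<omega>)" for z \<omega>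
  have int_F: "integrable M (F z)" for z
    unfolding F_def A_def
    by (intro Bochner_Integration.integrable_sum integrable_shortfall_term[OF meas nonneg]) simp
  have shortfall_F: "shortfall M Y t z = (\<integral>\<omega>. F z \<omega> \<partial>M)" for z
    unfolding shortfall_def F_def A_def
    by (rule Bochner_Integration.integral_sum[symmetric]) (intro integrable_shortfall_term[OF meas nonneg], simp)
  have int_A: "integrable M (\<lambda>\<omega>. indicator A \<omega> :: real)"
    unfolding A_def
    by (rule integrable_const_bound[where B = 1]) (auto simp: borel_measurable_indicator_total_le[OF meas])
  have pointwise: "F w \<omega> \<le> F v \<omega> + r * indicator A \<omega>" for \<omega>
  proof -
    have "(\<Sum>k<length Y. max ((Y ! k) \<omega> - w ! k) 0)
        \<le> (\<Sum>k<length Y. max ((Y ! k) \<omega> - v ! k) 0 + max (v ! k - w ! k) 0)"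
      by (intro sum_mono) auto
    also have "\<dots> \<le> (\<Sum>k<length Y. max ((Y ! k) \<omega> - v ! k) 0) + r"
      using lowered by (simp add: sum.distrib)
    finally have "(\<Sum>k<length Y. max ((Y ! k) \<omega> - w ! k) 0) * indicator A \<omega>
        \<le> ((\<Sum>k<length Y. max ((Y ! k) \<omega> - v ! k) 0) + r) * indicator A \<omega>"
      by (rule mult_right_mono) simp
    then show ?thesis
      unfolding F_def by (simp add: sum_distrib_right distrib_right)
  qed
  have "shortfall M Y t w \<le> (\<integral>\<omega>. F v \<omega> + r * indicator A \<omega> \<partial>M)"
    unfolding shortfall_F by (intro integral_mono int_F Bochner_Integration.integrable_add
        Bochner_Integration.integrable_mult_right int_A pointwise)
  also have "\<dots> = shortfall M Y t v + r * (\<integral>\<omega>. indicator A \<omega> \<partial>M)"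
    by (simp add: shortfall_F int_F int_A)
  finally show ?thesis unfolding A_def .
qed

end

lemma alloc_setI:
  assumes "length w = n" "\<forall>k<n. 0 \<le> w ! k" "sum_list w = (t::real)"
  shows "w \<in> alloc_set n t"
proof -
  have "w ! k \<le> t" if "k < n" for k
  proof -
    have "w ! k \<le> (\<Sum>i<n. w ! i)"
      by (rule member_le_sum) (use assms that in auto)
    with assms show ?thesis by (simp add: sum_list_sum_nth atLeast0LessThan)
  qed
  with assms show ?thesis unfolding alloc_set_def by auto
qed

lemma alloc_set_add_uniform:
  fixes v :: "real list"
  assumes "\<forall>k<length v. 0 \<le> v ! k" "sum_list v = s" "s \<le> t" "v \<noteq> []"
  shows "map (\<lambda>x. x + (t - s) / length v) v \<in> alloc_set (length v) t"
proof (rule alloc_setI)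
  have "sum_list (map (\<lambda>x. x + (t - s) / length v) v) = s + length v * ((t - s) / length v)"
    using assms(2) by (simp add: sum_list_addf sum_list_triv)
  then show "sum_list (map (\<lambda>x. x + (t - s) / length v) v) = t"
    using assms(4) by simp
qed (use assms in auto)

lemma alloc_set_scale:
  fixes v :: "real list"
  assumes "\<forall>k<length v. 0 \<le> v ! k" "sum_list v = s" "0 \<le> t" "t < s"
  shows "map (\<lambda>x. x * (t / s)) v \<in> alloc_set (length v) t"
proof (rule alloc_setI)
  show "sum_list (map (\<lambda>x. x * (t / s)) v) = t"
    using assms sum_list_mult_const[of "\<lambda>x. x" "t / s" v] by simp
qed (use assms in auto)

lemma alloc_set_lowering_le_excess:
  fixes v :: "real list"
  assumes nonneg: "\<forall>k<length v. 0 \<le> v ! k" and sum: "sum_list v = s" and "0 \<le> t"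
    and nonempty: "v \<noteq> [] \<or> t = 0"
  shows "\<exists>w\<in>alloc_set (length v) t. (\<Sum>k<length v. max (v ! k - w ! k) 0) \<le> max (s - t) 0"
proof (cases "s \<le> t")
  case True
  show ?thesis
  proof (cases "v = []")
    case True
    with nonempty show ?thesis by (auto simp: alloc_set_def)
  next
    case False
    let ?w = "map (\<lambda>x. x + (t - s) / length v) v"
    have "(\<Sum>k<length v. max (v ! k - ?w ! k) 0) = 0"
      using \<open>s \<le> t\<close> by (intro sum.neutral) auto
    with alloc_set_add_uniform[OF nonneg sum \<open>s \<le> t\<close> False] show ?thesis by force
  qed
next
  case False
  let ?w = "map (\<lambda>x. x * (t / s)) v"
  have "s > 0" using False \<open>0 \<le> t\<close> by simp
  have "(\<Sum>k<length v. max (v ! k - ?w ! k) 0) = (\<Sum>k<length v. v ! k - v ! k * (t / s))"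
  proof (rule sum.cong[OF refl])
    fix k assume k: "k \<in> {..<length v}"
    have "v ! k * (t / s) \<le> v ! k"
      using nonneg k False \<open>s > 0\<close> by (intro mult_left_le) auto
    with k show "max (v ! k - ?w ! k) 0 = v ! k - v ! k * (t / s)" by simp
  qed
  also have "\<dots> = s - t"
    using sum \<open>s > 0\<close>
    by (simp add: sum_subtractf sum_list_sum_nth atLeast0LessThan flip: sum_distrib_right sum_divide_distrib)
  finally show ?thesis
    using alloc_set_scale[OF nonneg sum \<open>0 \<le> t\<close>] False by force
qed

lemma is_minimizer_Cons_const:
  assumes "prob_space M"
    and meas: "\<forall>k<length X. X ! k \<in> borel_measurable M"
    and nonneg: "\<forall>k<length X. \<forall>\<omega>\<in>space M. 0 \<le> (X ! k) \<omega>"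
    and "penalty_fn g"
    and hom: "\<forall>t\<ge>0. \<forall>x\<le>0. g (t * x) = t * g x"
    and "0 \<le> c" "c \<le> u"
    and min: "is_minimizer M g X (u - c) w"
  shows "is_minimizer M g ((\<lambda>_. c) # X) u (c # w)"
  unfolding is_minimizer_def
proof (intro conjI ballI)
  let ?Y = "(\<lambda>_. c) # X"
  let ?P = "\<integral>\<omega>. indicator (total_le X (u - c)) \<omega> \<partial>M"
  have w: "w \<in> alloc_set (length X) (u - c)"
    using min by (simp add: is_minimizer_def)
  then show "c # w \<in> alloc_set (length ?Y) u"
    using \<open>0 \<le> c\<close> \<open>c \<le> u\<close> by (auto simp: alloc_set_def nth_Cons split: nat.splits)
  fix v' assume v': "v' \<in> alloc_set (length ?Y) u"
  then obtain v\<^sub>0 v where v'_eq: "v' = v\<^sub>0 # v" and len: "length v = length X"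
    by (cases v') (auto simp: alloc_set_def)
  have v_nonneg: "\<forall>k<length v. 0 \<le> v ! k"
    using v' by (auto simp: alloc_set_def v'_eq)
  have v_sum: "sum_list v = u - v\<^sub>0"
    using v' by (simp add: alloc_set_def v'_eq)
  have "\<exists>w'\<in>alloc_set (length v) (u - c).
      (\<Sum>k<length v. max (v ! k - w' ! k) 0) \<le> max ((u - v\<^sub>0) - (u - c)) 0"
    using w len \<open>c \<le> u\<close>
    by (intro alloc_set_lowering_le_excess[OF v_nonneg v_sum]) (auto simp: alloc_set_def)
  then obtain w' where w': "w' \<in> alloc_set (length X) (u - c)"
    and lowering: "(\<Sum>k<length X. max (v ! k - w' ! k) 0) \<le> max (c - v\<^sub>0) 0"
    using len by auto
  have "0 \<le> g (-1)"
    using \<open>penalty_fn g\<close> by (simp add: penalty_fn_def)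
  have "indicator_fn M g ?Y u (c # w) = indicator_fn M g X (u - c) w"
    by (subst indicator_fn_Cons_const[OF hom]) (simp add: indicator_fn_eq_shortfall[OF hom])
  also have "\<dots> \<le> indicator_fn M g X (u - c) w'"
    using min w' by (simp add: is_minimizer_def)
  also have "\<dots> = g (-1) * shortfall M X (u - c) w'"
    by (rule indicator_fn_eq_shortfall[OF hom])
  also have "\<dots> \<le> g (-1) * (shortfall M X (u - c) v + max (c - v\<^sub>0) 0 * ?P)"
    using prob_space.shortfall_le_shortfall_add[OF \<open>prob_space M\<close> meas nonneg lowering]
    by (intro mult_left_mono \<open>0 \<le> g (-1)\<close>) simp
  also have "\<dots> = indicator_fn M g ?Y u v'"
    by (simp add: v'_eq indicator_fn_Cons_const[OF hom])
  finally show "indicator_fn M g ?Y u (c # w) \<le> indicator_fn M g ?Y u v'" .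
qed

lemma is_minimizer_opt_alloc: "H1 M g Y w \<Longrightarrow> is_minimizer M g Y w (opt_alloc M g Y w)"
  unfolding H1_def opt_alloc_def by (rule theI')

lemma opt_alloc_eqI: "H1 M g Y w \<Longrightarrow> is_minimizer M g Y w v \<Longrightarrow> opt_alloc M g Y w = v"
  unfolding H1_def opt_alloc_def by (rule the1_equality)

theorem mainTheorem3:
  fixes M :: "'a measure" and g :: "real \<Rightarrow> real"
    and X :: "('a \<Rightarrow> real) list" and u c :: real
  assumes "prob_space M"
    and "\<forall>k<length X. X ! k \<in> borel_measurable M"
    and "\<forall>k<length X. \<forall>\<omega>\<in>space M. 0 \<le> (X ! k) \<omega>"
    and "0 \<le> u"
    and "penalty_fn g"
    and "\<forall>t\<ge>0. \<forall>x\<le>0. g (t * x) = t * g x"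
    and "0 \<le> c" and "c \<le> u"
    and "H1 M g ((\<lambda>_. c) # X) u"
    and "H1 M g X (u - c)"
  shows "opt_alloc M g ((\<lambda>_. c) # X) u = c # opt_alloc M g X (u - c)"
  using assms(1-3,5-8) is_minimizer_opt_alloc[OF assms(10)]
  by (intro opt_alloc_eqI[OF assms(9)] is_minimizer_Cons_const)

end
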